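(* Let $\mathbb{T}$ be a time scale, let $I\subseteq\mathbb{R}$ be an interval, write $I_{\mathbb{T}}:=I\cap\mathbb{T}$, and let $t_0\in I_{\mathbb{T}}$. Let $p,q\in\mathbb{R}$ be constants and put $k:=1+|p|+|q|$. If $y$ is any solution on $I_{\mathbb{T}}$ of the homogeneous dynamic equation $$y^{\Delta\Delta}(t)+p\,y^{\Delta}(t)+q\,y(t)=0,$$ then $$\|y(t)\|_2\le \|y(t_0)\|_2\, e_k(t,t_0)\qquad\text{for all } t\in I_{\mathbb{T}},\ t\ge t_0,$$ where $\|y(t)\|_2:=\big((y(t))^2+(y^\Delta(t))^2\big)^{1/2}$.
   Context: A time scale $\mathbb{T}$ is a nonempty closed subset of $\mathbb{R}$. The forward jump operator is $\sigma(t):=\inf\{s\in\mathbb{T}:s>t\}$, the graininess is $\mu(t):=\sigma(t)-t$, and $y^\sigma:=y\circ\sigma$. The delta derivative is $y^\Delta(t):=\lim_{s\to t}\frac{y^\sigma(t)-y(s)}{\sigma(t)-s}$ (for $t\in\mathbb{T}^\kappa$), and $y^{\Delta\Delta}=(y^\Delta)^\Delta$. For a right-dense continuous function $\ell$ with $1+\mu(t)\ell(t)\neq0$, the time-scale exponential $e_\ell(\cdot,t_0)$ is the unique solution of $\phi^\Delta(t)=\ell(t)\phi(t)$, $\phi(t_0)=1$; for a positive constant $k$ this applies. *)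

theory Defs
  imports "HOL-Analysis.Analysis"
begin

definition time_scale :: "real set \<Rightarrow> bool" where
  "time_scale T \<longleftrightarrow> T \<noteq> {} \<and> closed T"

text \<open>Forward jump operator, with the convention inf {} = t (i.e. sigma(max T) = max T).\<close>
definition ts_sigma :: "real set \<Rightarrow> real \<Rightarrow> real" where
  "ts_sigma T t = (if {s \<in> T. s > t} = {} then t else Inf {s \<in> T. s > t})"

definition ts_rho :: "real set \<Rightarrow> real \<Rightarrow> real" where
  "ts_rho T t = (if {s \<in> T. s < t} = {} then t else Sup {s \<in> T. s < t})"

definition ts_mu :: "real set \<Rightarrow> real \<Rightarrow> real" where
  "ts_mu T t = ts_sigma T t - t"

text \<open>T^kappa: remove a left-scattered maximum, if any.\<close>
definition ts_kappa :: "real set \<Rightarrow> real set" where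
  "ts_kappa T = (if \<exists>m\<in>T. (\<forall>s\<in>T. s \<le> m) \<and> ts_rho T m < m
                 then T - {m. m \<in> T \<and> (\<forall>s\<in>T. s \<le> m)} else T)"

definition has_delta_derivative ::
  "real set \<Rightarrow> (real \<Rightarrow> real) \<Rightarrow> real \<Rightarrow> real \<Rightarrow> bool" where
  "has_delta_derivative T f D t \<longleftrightarrow>
     (\<forall>\<epsilon>>0. \<exists>\<delta>>0. \<forall>s\<in>T. \<bar>s - t\<bar> < \<delta> \<longrightarrow>
        \<bar>f (ts_sigma T t) - f s - D * (ts_sigma T t - s)\<bar> \<le> \<epsilon> * \<bar>ts_sigma T t - s\<bar>)"

definition ts_exp :: "real set \<Rightarrow> (real \<Rightarrow> real) \<Rightarrow> real \<Rightarrow> real \<Rightarrow> real" where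
  "ts_exp T l t t0 = (THE v. \<exists>\<phi>. \<phi> t0 = 1 \<and>
      (\<forall>s\<in>ts_kappa T. has_delta_derivative T \<phi> (l s * \<phi> s) s) \<and> \<phi> t = v)"

end

theory Submission
  imports Defs
begin

text \<open>
  On a time scale a function is nonincreasing as soon as it does not increase across
  right-scattered points and has a nonpositive derivative at right-dense points (a consequence
  of the induction principle of Bohner and Peterson). We apply this to \<open>V / e\<^sub>k\<^sup>2\<close> with
  \<open>V = y\<^sup>2 + (y\<^sup>\<Delta>)\<^sup>2\<close>, the squared norm of \<open>z = (y, y\<^sup>\<Delta>)\<close>, which solves \<open>z\<^sup>\<Delta> = A z\<close> for the
  companion matrix \<open>A\<close>. At a right-scattered point \<open>z\<close> makes an Euler step \<open>z + \<mu> A z\<close>, which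
  multiplies \<open>|z|\<^sup>2\<close> by at most \<open>(1 + k \<mu>)\<^sup>2\<close>, exactly the factor by which \<open>e\<^sub>k\<^sup>2\<close> grows; at a
  right-dense point \<open>(|z|\<^sup>2)' = 2 \<langle>z, A z\<rangle> \<le> 2 k |z|\<^sup>2 = 2 k V\<close>, matching \<open>(e\<^sub>k\<^sup>2)' = 2 k e\<^sub>k\<^sup>2\<close>.
  The same comparison, applied to \<open>(\<phi> - e\<^sub>k)\<^sup>2\<close>, shows that \<open>\<phi>\<^sup>\<Delta> = k \<phi>\<close> has at most one
  solution with \<open>\<phi>(t\<^sub>0) = 1\<close>, and an explicit formula supplies one, so the definite description
  defining the time-scale exponential denotes \<open>e\<^sub>k\<close>.
\<close>

section \<open>Jump operators\<close>

lemma ts_sigma_ge: "t \<le> ts_sigma T t"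
  unfolding ts_sigma_def by (auto intro!: cInf_greatest)

lemma ts_sigma_le: "s \<in> T \<Longrightarrow> t < s \<Longrightarrow> ts_sigma T t \<le> s"
  unfolding ts_sigma_def by (auto intro!: cInf_lower bdd_belowI[where m=t])

lemma ts_mu_nonneg: "0 \<le> ts_mu T t"
  unfolding ts_mu_def using ts_sigma_ge by simp

lemma ts_sigma_eq_Inf: "{u \<in> T. t < u} \<noteq> {} \<Longrightarrow> ts_sigma T t = Inf {u \<in> T. t < u}"
  unfolding ts_sigma_def by (rule if_not_P)

lemma ts_sigma_mem:
  assumes "closed T" "s \<in> T" "t < s"
  shows "ts_sigma T t \<in> T"
proof -
  have ne: "{u \<in> T. t < u} \<noteq> {}" using assms by auto
  have "Inf {u \<in> T. t < u} \<in> closure {u \<in> T. t < u}"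
    by (rule closure_contains_Inf[OF ne]) (auto intro!: bdd_belowI[where m=t])
  also have "\<dots> \<subseteq> T" by (rule closure_minimal) (use assms(1) in auto)
  finally show ?thesis using ts_sigma_eq_Inf[OF ne] by simp
qed

lemma ts_right_dense_approach:
  assumes "ts_sigma T t = t" "s \<in> T" "t < s" "e > 0"
  obtains u where "u \<in> T" "t < u" "u < t + e"
proof -
  have ne: "{u \<in> T. t < u} \<noteq> {}" using assms by auto
  hence "Inf {u \<in> T. t < u} < t + e" using assms ts_sigma_eq_Inf[OF ne] by simp
  from cInf_lessD[OF ne this] obtain u where "u \<in> T" "t < u" "u < t + e" by blast
  thus ?thesis by (rule that)
qed

lemma ts_kappa_subset: "ts_kappa T \<subseteq> T"
  unfolding ts_kappa_def by auto

lemma ts_kappa_memI: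
  assumes "t \<in> T" "\<not> ((\<forall>u\<in>T. u \<le> t) \<and> ts_rho T t < t)"
  shows "t \<in> ts_kappa T"
proof (cases "\<exists>m\<in>T. (\<forall>u\<in>T. u \<le> m) \<and> ts_rho T m < m")
  case True
  then obtain m where m: "m \<in> T" "\<forall>u\<in>T. u \<le> m" "ts_rho T m < m" by blast
  hence "t \<noteq> m" using assms by blast
  hence "t \<in> T - {m. m \<in> T \<and> (\<forall>u\<in>T. u \<le> m)}" using m assms(1) by (auto intro: antisym)
  thus ?thesis unfolding ts_kappa_def using True by (simp only: if_True)
next
  case False
  thus ?thesis unfolding ts_kappa_def using assms(1) by (simp only: if_False)
qed

lemma less_in_ts_kappa: "t \<in> T \<Longrightarrow> s \<in> T \<Longrightarrow> t < s \<Longrightarrow> t \<in> ts_kappa T"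
  by (rule ts_kappa_memI) (auto simp: not_le)

lemma left_dense_in_ts_kappa:
  assumes t: "t \<in> T" and left_dense: "\<forall>d>0. \<exists>r\<in>T. t - d < r \<and> r < t"
  shows "t \<in> ts_kappa T"
proof (rule ts_kappa_memI[OF t], rule notI)
  assume "(\<forall>u\<in>T. u \<le> t) \<and> ts_rho T t < t"
  then obtain r where r: "r \<in> T" "ts_rho T t < r" "r < t"
    using left_dense[rule_format, of "t - ts_rho T t"] by auto
  hence "r \<le> Sup {u \<in> T. u < t}"
    by (intro cSup_upper bdd_aboveI[where M=t]) auto
  moreover have "ts_rho T t = Sup {u \<in> T. u < t}"
    unfolding ts_rho_def using r by (intro if_not_P) auto
  ultimately show False using r by simp
qed

section \<open>Delta derivatives\<close>

lemma has_delta_derivative_jump: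
  assumes "has_delta_derivative T f D t" "t \<in> T"
  shows "f (ts_sigma T t) = f t + D * ts_mu T t"
proof (rule ccontr)
  define X where "X = f (ts_sigma T t) - f t - D * ts_mu T t"
  assume "f (ts_sigma T t) \<noteq> f t + D * ts_mu T t"
  hence X: "\<bar>X\<bar> > 0" unfolding X_def by simp
  have "\<bar>X\<bar> / (ts_mu T t + 1) > 0" using X ts_mu_nonneg[of T t] by simp
  from assms(1)[unfolded has_delta_derivative_def, rule_format, OF this]
  have "\<bar>X\<bar> \<le> \<bar>X\<bar> / (ts_mu T t + 1) * ts_mu T t"
    using assms(2) ts_mu_nonneg[of T t] unfolding X_def ts_mu_def by fastforce
  also have "\<dots> < \<bar>X\<bar>" using X ts_mu_nonneg[of T t] by (simp add: field_simps)
  finally show False by simp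
qed

lemma has_delta_derivative_iff_eventually:
  assumes "t \<in> T"
  shows "has_delta_derivative T f D t \<longleftrightarrow>
    f (ts_sigma T t) = f t + D * ts_mu T t \<and>
    (\<forall>e>0. \<forall>\<^sub>F s in at t within T.
       \<bar>f (ts_sigma T t) - f s - D * (ts_sigma T t - s)\<bar> \<le> e * \<bar>ts_sigma T t - s\<bar>)"
    (is "_ \<longleftrightarrow> ?jump \<and> (\<forall>e>0. ?small e)")
proof
  assume H: "has_delta_derivative T f D t"
  have "?small e" if "e > 0" for e
    using H[unfolded has_delta_derivative_def, rule_format, OF that]
    unfolding eventually_at dist_real_def by blast
  thus "?jump \<and> (\<forall>e>0. ?small e)" using has_delta_derivative_jump[OF H assms] by blast
next
  assume H: "?jump \<and> (\<forall>e>0. ?small e)"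
  show "has_delta_derivative T f D t"
    unfolding has_delta_derivative_def
  proof (intro allI impI)
    fix e :: real assume "e > 0"
    with H obtain d where "d > 0" and d: "\<forall>s\<in>T. s \<noteq> t \<and> \<bar>s - t\<bar> < d \<longrightarrow>
        \<bar>f (ts_sigma T t) - f s - D * (ts_sigma T t - s)\<bar> \<le> e * \<bar>ts_sigma T t - s\<bar>"
      unfolding eventually_at dist_real_def by blast
    moreover have "\<bar>f (ts_sigma T t) - f t - D * (ts_sigma T t - t)\<bar> \<le> e * \<bar>ts_sigma T t - t\<bar>"
      using H \<open>e > 0\<close> by (simp add: ts_mu_def)
    ultimately show "\<exists>d>0. \<forall>s\<in>T. \<bar>s - t\<bar> < d \<longrightarrow>
        \<bar>f (ts_sigma T t) - f s - D * (ts_sigma T t - s)\<bar> \<le> e * \<bar>ts_sigma T t - s\<bar>"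
      by metis
  qed
qed

lemma has_delta_derivative_right_dense_iff:
  assumes "t \<in> T" "ts_sigma T t = t"
  shows "has_delta_derivative T f D t \<longleftrightarrow> (f has_real_derivative D) (at t within T)"
proof -
  have "\<bar>f t - f s - D * (t - s)\<bar> = norm (f s - f t - D * (s - t))" for s
    by simp argo
  thus ?thesis
    unfolding has_delta_derivative_iff_eventually[OF assms(1)] has_field_derivative_def
      has_derivative_within_alt2 assms(2)
    by (simp add: bounded_linear_mult_right ts_mu_def assms(2) abs_minus_commute)
qed

lemma has_delta_derivative_remainder_tendsto:
  assumes "has_delta_derivative T f D t"
  shows "((\<lambda>s. f (ts_sigma T t) - f s - D * (ts_sigma T t - s)) \<longlongrightarrow> 0) (at t within T)"
proof (rule tendstoI)
  fix e :: real assume e: "e > 0"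
  define c where "c = ts_mu T t + 1"
  have c: "c > 0" using ts_mu_nonneg[of T t] unfolding c_def by linarith
  obtain d where d: "d > 0" "\<forall>s\<in>T. \<bar>s - t\<bar> < d \<longrightarrow>
      \<bar>f (ts_sigma T t) - f s - D * (ts_sigma T t - s)\<bar> \<le> e / (2 * c) * \<bar>ts_sigma T t - s\<bar>"
    using assms[unfolded has_delta_derivative_def, rule_format, of "e / (2 * c)"] e c by auto
  show "\<forall>\<^sub>F s in at t within T. dist (f (ts_sigma T t) - f s - D * (ts_sigma T t - s)) 0 < e"
    unfolding eventually_at
  proof (intro exI[of _ "min d 1"] conjI ballI impI)
    fix s assume s: "s \<in> T" "s \<noteq> t \<and> dist s t < min d 1"
    have "\<bar>ts_sigma T t - s\<bar> < c"
      using s ts_sigma_ge[of t T] unfolding c_def ts_mu_def dist_real_def by linarith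
    hence "e / (2 * c) * \<bar>ts_sigma T t - s\<bar> \<le> e / (2 * c) * c"
      using e c by (intro mult_left_mono) auto
    also have "\<dots> < e" using e c by simp
    finally show "dist (f (ts_sigma T t) - f s - D * (ts_sigma T t - s)) 0 < e"
      using d s by (auto simp: dist_real_def)
  qed (use d in auto)
qed

lemma has_delta_derivative_continuous:
  assumes "has_delta_derivative T f D t" "t \<in> T"
  shows "continuous (at t within T) f"
proof -
  have "((\<lambda>s. f (ts_sigma T t) - D * (ts_sigma T t - s)
                - (f (ts_sigma T t) - f s - D * (ts_sigma T t - s)))
        \<longlongrightarrow> f (ts_sigma T t) - D * (ts_sigma T t - t) - 0) (at t within T)"
    by (intro tendsto_intros has_delta_derivative_remainder_tendsto[OF assms(1)])
  thus ?thesis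
    using has_delta_derivative_jump[OF assms] unfolding continuous_within ts_mu_def by simp
qed

lemma has_delta_derivative_right_scatteredI:
  assumes t: "t \<in> T" "t < ts_sigma T t"
    and jump: "f (ts_sigma T t) = f t + D * ts_mu T t"
    and cont: "continuous (at t within T) f"
  shows "has_delta_derivative T f D t"
  unfolding has_delta_derivative_iff_eventually[OF t(1)]
proof (intro conjI jump allI impI)
  fix e :: real assume e: "e > 0"
  have mu: "ts_mu T t > 0" using t(2) by (simp add: ts_mu_def)
  have "((\<lambda>s. (f t - f s) - D * (t - s)) \<longlongrightarrow> (f t - f t) - D * (t - t)) (at t within T)"
    using cont unfolding continuous_within by (intro tendsto_intros)
  from tendstoD[OF this[simplified], of "e * ts_mu T t"]
  have "\<forall>\<^sub>F s in at t within T. \<bar>(f t - f s) - D * (t - s)\<bar> < e * ts_mu T t"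
    using e mu by (simp add: dist_real_def)
  moreover have "\<forall>\<^sub>F s in at t within T. s \<le> t"
    unfolding eventually_at
    using mu ts_sigma_le[of _ T t] by (intro exI[of _ "ts_mu T t"]) (force simp: dist_real_def ts_mu_def)
  ultimately show "\<forall>\<^sub>F s in at t within T.
      \<bar>f (ts_sigma T t) - f s - D * (ts_sigma T t - s)\<bar> \<le> e * \<bar>ts_sigma T t - s\<bar>"
  proof eventually_elim
    case (elim s)
    have "e * ts_mu T t \<le> e * \<bar>ts_sigma T t - s\<bar>"
      using elim(2) e by (intro mult_left_mono) (auto simp: ts_mu_def)
    moreover have "f (ts_sigma T t) - f s - D * (ts_sigma T t - s) = (f t - f s) - D * (t - s)"
      using jump by (simp add: ts_mu_def algebra_simps)
    ultimately show ?case using elim(1) by simp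
  qed
qed

section \<open>Induction on time scales\<close>

text \<open>The supremum \<open>m\<close> of the points up to which \<open>P\<close> holds throughout is itself such a point
  (by closedness of \<open>T\<close> and the left-dense step), and the right-scattered and right-dense steps
  push beyond \<open>m\<close> unless \<open>m = b\<close>.\<close>
lemma ts_induct:
  fixes P :: "real \<Rightarrow> bool"
  assumes T: "closed T" and a: "a \<in> T" and b: "b \<in> T" "a \<le> b"
    and base: "P a"
    and right_scattered: "\<And>t. t \<in> T \<Longrightarrow> a \<le> t \<Longrightarrow> t < b \<Longrightarrow> t < ts_sigma T t \<Longrightarrow>
        P t \<Longrightarrow> P (ts_sigma T t)"
    and right_dense: "\<And>t. t \<in> T \<Longrightarrow> a \<le> t \<Longrightarrow> t < b \<Longrightarrow> ts_sigma T t = t \<Longrightarrow>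
        P t \<Longrightarrow> \<exists>d>0. \<forall>u\<in>T. t < u \<and> u < t + d \<longrightarrow> P u"
    and left_dense: "\<And>t. t \<in> T \<Longrightarrow> a < t \<Longrightarrow> t \<le> b \<Longrightarrow>
        (\<forall>d>0. \<exists>r\<in>T. t - d < r \<and> r < t) \<Longrightarrow> (\<forall>u\<in>T. a \<le> u \<and> u < t \<longrightarrow> P u) \<Longrightarrow> P t"
  shows "P b"
proof -
  define A where "A = {r \<in> T. a \<le> r \<and> r \<le> b \<and> (\<forall>u\<in>T. a \<le> u \<and> u \<le> r \<longrightarrow> P u)}"
  define m where "m = Sup A"
  have aA: "a \<in> A" unfolding A_def using a b base by auto
  have bdd: "bdd_above A" unfolding A_def by (auto intro!: bdd_aboveI[where M=b])
  have le_m: "r \<le> m" if "r \<in> A" for r unfolding m_def using that bdd by (rule cSup_upper)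
  have am: "a \<le> m" by (rule le_m[OF aA])
  have mb: "m \<le> b" unfolding m_def using aA by (intro cSup_least) (auto simp: A_def)
  have "m \<in> closure A" unfolding m_def using aA bdd by (intro closure_contains_Sup) auto
  hence mT: "m \<in> T" using closure_minimal[OF _ T, of A] by (auto simp: A_def)
  have below_m: "P u" if u: "u \<in> T" "a \<le> u" "u < m" for u
  proof -
    obtain r where "r \<in> A" "u < r" using less_cSupD[of A u] aA u unfolding m_def by blast
    thus ?thesis using u unfolding A_def by auto
  qed
  have "P m"
  proof (cases "m = a \<or> (\<forall>d>0. \<exists>r\<in>T. m - d < r \<and> r < m)")
    case True
    thus ?thesis using base am mb mT below_m left_dense[of m] by force
  next
    case False
    then obtain d where d: "d > 0" "\<forall>r\<in>T. \<not> (m - d < r \<and> r < m)" by auto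
    obtain r where r: "r \<in> A" "m - d < r" using less_cSupD[of A "m - d"] aA d unfolding m_def by auto
    hence "r = m" using d le_m[of r] unfolding A_def by force
    thus ?thesis using r unfolding A_def by auto
  qed
  hence mA: "m \<in> A" unfolding A_def using mT am mb below_m by (auto simp: le_less)
  have A_extend: "r \<in> A" if "r \<in> T" "m \<le> r" "r \<le> b" "\<forall>u\<in>T. m < u \<and> u \<le> r \<longrightarrow> P u" for r
    using that mA am unfolding A_def by (auto simp: not_le[symmetric])
  have "\<not> m < b"
  proof
    assume mb': "m < b"
    show False
    proof (cases "m < ts_sigma T m")
      case True
      have "ts_sigma T m \<in> A"
        using ts_sigma_mem[OF T b(1) mb'] ts_sigma_le[OF b(1) mb'] True
          right_scattered[OF mT am mb' True \<open>P m\<close>] ts_sigma_le[of _ T m]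
        by (intro A_extend) (auto dest: antisym)
      thus False using le_m True by fastforce
    next
      case False
      hence "ts_sigma T m = m" using ts_sigma_ge[of m T] by simp
      moreover obtain d where d: "d > 0" "\<forall>u\<in>T. m < u \<and> u < m + d \<longrightarrow> P u"
        using right_dense[OF mT am mb' _ \<open>P m\<close>] False ts_sigma_ge[of m T] by force
      ultimately obtain r where r: "r \<in> T" "m < r" "r < m + min d (b - m)"
        using ts_right_dense_approach[OF _ b(1) mb', of "min d (b - m)"] d(1) mb' by auto
      have "r \<in> A" using r d by (intro A_extend) auto
      thus False using le_m r by fastforce
    qed
  qed
  hence "m = b" using mb by simp
  thus ?thesis using mA unfolding A_def by auto
qed

lemma le_at_left_dense_point:
  fixes F G :: "real \<Rightarrow> real"
  assumes F: "continuous (at t within T) F" and G: "continuous (at t within T) G"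
    and left_dense: "\<forall>d>0. \<exists>r\<in>T. t - d < r \<and> r < t" and "a < t"
    and le: "\<forall>u\<in>T. a \<le> u \<and> u < t \<longrightarrow> F u \<le> G u"
  shows "F t \<le> G t"
proof (rule tendsto_le[of "at t within T \<inter> {a<..<t}" G _ F])
  have "t islimpt T \<inter> {a<..<t}"
    unfolding islimpt_approachable
  proof (intro allI impI)
    fix e :: real assume "e > 0"
    then obtain r where r: "r \<in> T" "t - min e (t - a) < r" "r < t"
      using left_dense[rule_format, of "min e (t - a)"] \<open>a < t\<close> by auto
    show "\<exists>r\<in>T \<inter> {a<..<t}. r \<noteq> t \<and> dist r t < e"
      by (rule bexI[of _ r]) (use r in \<open>auto simp: dist_real_def\<close>)
  qed
  thus "at t within T \<inter> {a<..<t} \<noteq> bot" by (simp add: trivial_limit_within)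
  show "(F \<longlongrightarrow> F t) (at t within T \<inter> {a<..<t})" "(G \<longlongrightarrow> G t) (at t within T \<inter> {a<..<t})"
    using F G unfolding continuous_within by (auto intro: tendsto_within_subset)
  show "\<forall>\<^sub>F u in at t within T \<inter> {a<..<t}. F u \<le> G u"
    using le by (auto simp: eventually_at_filter)
qed

lemma has_real_derivative_within_right_le:
  assumes "(F has_real_derivative D) (at t within T)" "D < c"
  shows "\<exists>d>0. \<forall>u\<in>T. t < u \<and> u < t + d \<longrightarrow> F u \<le> F t + c * (u - t)"
proof -
  from assms(1)[unfolded has_field_derivative_iff, THEN tendstoD, of "c - D"] assms(2)
  obtain d where "d > 0" and d: "\<forall>u\<in>T. u \<noteq> t \<and> dist u t < d \<longrightarrow>
      dist ((F u - F t) / (u - t)) D < c - D"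
    unfolding eventually_at by auto
  have "F u \<le> F t + c * (u - t)" if u: "u \<in> T" "t < u" "u < t + d" for u
  proof -
    have "(F u - F t) / (u - t) < c" using d u by (auto simp: dist_real_def)
    thus ?thesis using u by (simp add: divide_less_eq algebra_simps)
  qed
  thus ?thesis using \<open>d > 0\<close> by blast
qed

lemma ts_nonpos_imp_nonincreasing:
  fixes F :: "real \<Rightarrow> real"
  assumes T: "closed T" and a: "a \<in> T" and b: "b \<in> T" "a \<le> b"
    and right_scattered: "\<And>t. t \<in> T \<Longrightarrow> a \<le> t \<Longrightarrow> t < b \<Longrightarrow> t < ts_sigma T t \<Longrightarrow>
        F (ts_sigma T t) \<le> F t"
    and right_dense: "\<And>t. t \<in> T \<Longrightarrow> a \<le> t \<Longrightarrow> t < b \<Longrightarrow> ts_sigma T t = t \<Longrightarrow>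
        \<exists>D\<le>0. (F has_real_derivative D) (at t within T)"
    and left_dense: "\<And>t. t \<in> T \<Longrightarrow> a < t \<Longrightarrow> t \<le> b \<Longrightarrow>
        (\<forall>d>0. \<exists>r\<in>T. t - d < r \<and> r < t) \<Longrightarrow> continuous (at t within T) F"
  shows "F b \<le> F a"
proof (rule field_le_epsilon)
  fix e :: real assume e: "e > 0"
  define c where "c = e / (b - a + 1)"
  have c: "c > 0" using e b by (simp add: c_def)
  have "F b \<le> F a + c * (b - a)"
  proof (rule ts_induct[OF T a b, where P = "\<lambda>u. F u \<le> F a + c * (u - a)"])
    fix t assume t: "t \<in> T" "a \<le> t" "t < b" "t < ts_sigma T t" "F t \<le> F a + c * (t - a)"
    moreover have "c * (t - a) \<le> c * (ts_sigma T t - a)" using c t(4) by simp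
    ultimately show "F (ts_sigma T t) \<le> F a + c * (ts_sigma T t - a)"
      using right_scattered[OF t(1-4)] by linarith
  next
    fix t assume t: "t \<in> T" "a \<le> t" "t < b" "ts_sigma T t = t" "F t \<le> F a + c * (t - a)"
    obtain D where "D \<le> 0" "(F has_real_derivative D) (at t within T)"
      using right_dense[OF t(1-4)] by blast
    then obtain d where "d > 0" "\<forall>u\<in>T. t < u \<and> u < t + d \<longrightarrow> F u \<le> F t + c * (u - t)"
      using has_real_derivative_within_right_le[of F D t T c] c by auto
    moreover have "F t + c * (u - t) \<le> F a + c * (u - a)" for u
      using t(5) by (simp add: algebra_simps)
    ultimately show "\<exists>d>0. \<forall>u\<in>T. t < u \<and> u < t + d \<longrightarrow> F u \<le> F a + c * (u - a)"
      by (meson order_trans)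
  next
    fix t assume "t \<in> T" "a < t" "t \<le> b" "\<forall>d>0. \<exists>r\<in>T. t - d < r \<and> r < t"
      "\<forall>u\<in>T. a \<le> u \<and> u < t \<longrightarrow> F u \<le> F a + c * (u - a)"
    thus "F t \<le> F a + c * (t - a)"
      using left_dense by (intro le_at_left_dense_point[where a = a] continuous_intros) auto
  qed simp
  also have "c * (b - a) \<le> e"
    using b e by (simp add: c_def field_simps)
  finally show "F b \<le> F a + e" by simp
qed

section \<open>The exponential function \<open>e\<^sub>k\<close>\<close>

definition ts_right_scattered :: "real set \<Rightarrow> real set" where
  "ts_right_scattered T = {t \<in> T. t < ts_sigma T t}"

definition ln_defect :: "real \<Rightarrow> real" where
  "ln_defect x = x - ln (1 + x)"

definition ts_defect_sum :: "real set \<Rightarrow> real \<Rightarrow> real \<Rightarrow> real \<Rightarrow> real" where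
  "ts_defect_sum T k a b =
     infsum (\<lambda>u. ln_defect (k * ts_mu T u)) (ts_right_scattered T \<inter> {a..<b})"

text \<open>The logarithm of \<open>e\<^sub>k(t, t\<^sub>0)\<close>. The continuous part of the growth contributes
  \<open>k (t - t\<^sub>0)\<close>; across a right-scattered point \<open>u\<close> the exponential gains the factor
  \<open>1 + k \<mu>(u)\<close> instead of \<open>exp (k \<mu>(u))\<close>, whence the correction \<open>ln_defect (k \<mu>(u))\<close>.\<close>
definition ts_exp_log :: "real set \<Rightarrow> real \<Rightarrow> real \<Rightarrow> real \<Rightarrow> real" where
  "ts_exp_log T k t0 t = k * (t - t0) - (ts_defect_sum T k t0 t - ts_defect_sum T k t t0)"

lemma sum_ts_mu_le:
  assumes "b \<in> T" "finite F" "F \<subseteq> ts_right_scattered T \<inter> {a..<b}" "a \<le> b"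
  shows "sum (ts_mu T) F \<le> b - a"
  using assms
proof (induction "card F" arbitrary: F b rule: less_induct)
  case less
  show ?case
  proof (cases "F = {}")
    case False
    define m where "m = Max F"
    have mF: "m \<in> F" unfolding m_def using False less by simp
    hence m: "m \<in> T" "a \<le> m" "m < b" using less(4) by (auto simp: ts_right_scattered_def)
    have "F - {m} \<subseteq> ts_right_scattered T \<inter> {a..<m}"
      using less(3,4) by (auto simp: m_def less_le)
    hence "sum (ts_mu T) (F - {m}) \<le> m - a"
      using less(1)[OF card_Diff1_less[OF less(3) mF] m(1)] less(3) m by simp
    moreover have "ts_mu T m \<le> b - m" using ts_sigma_le[OF less(2) m(3)] by (simp add: ts_mu_def)
    ultimately show ?thesis using mF less(3) by (simp add: sum.remove)
  qed (use less in simp)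
qed

lemma ts_mu_summable_on:
  assumes "b \<in> T"
  shows "ts_mu T summable_on (ts_right_scattered T \<inter> {a..<b})"
proof (cases "a \<le> b")
  case True
  show ?thesis
    by (rule nonneg_bdd_above_summable_on[OF ts_mu_nonneg bdd_aboveI[where M="b - a"]])
      (use sum_ts_mu_le[OF assms _ _ True] in blast)
qed simp

lemma infsum_ts_mu_le:
  assumes "b \<in> T" "a \<le> b"
  shows "infsum (ts_mu T) (ts_right_scattered T \<inter> {a..<b}) \<le> b - a"
  by (rule infsum_le_finite_sums[OF ts_mu_summable_on[OF assms(1)]]) (rule sum_ts_mu_le[OF assms(1) _ _ assms(2)])

lemma ln_defect_bounds:
  assumes "x \<ge> 0"
  shows "0 \<le> ln_defect x" "ln_defect x \<le> x" "ln_defect x \<le> x\<^sup>2"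
proof -
  show "0 \<le> ln_defect x" using ln_add_one_self_le_self[OF assms] by (simp add: ln_defect_def)
  show "ln_defect x \<le> x" using assms by (simp add: ln_defect_def)
  show "ln_defect x \<le> x\<^sup>2"
  proof (cases "x \<le> 1")
    case True
    from ln_one_plus_pos_lower_bound[OF assms True] show ?thesis by (simp add: ln_defect_def)
  next
    case False
    hence "x \<le> x\<^sup>2" by (simp add: power2_eq_square)
    moreover have "0 \<le> ln (1 + x)" using assms by simp
    ultimately show ?thesis by (simp add: ln_defect_def)
  qed
qed

lemma ts_defect_summable_on:
  assumes "b \<in> T" "k \<ge> 0"
  shows "(\<lambda>u. ln_defect (k * ts_mu T u)) summable_on (ts_right_scattered T \<inter> {a..<b})"
  by (rule summable_on_comparison_test[OF summable_on_cmult_right[OF ts_mu_summable_on[OF assms(1)], of k]])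
    (use ln_defect_bounds ts_mu_nonneg assms(2) in \<open>simp_all add: mult_nonneg_nonneg\<close>)

lemma ts_defect_sum_empty: "b \<le> a \<Longrightarrow> ts_defect_sum T k a b = 0"
  unfolding ts_defect_sum_def by simp

lemma ts_defect_sum_split:
  assumes "a \<le> b" "b \<le> c" "b \<in> T" "c \<in> T" "k \<ge> 0"
  shows "ts_defect_sum T k a c = ts_defect_sum T k a b + ts_defect_sum T k b c"
proof -
  have "ts_right_scattered T \<inter> {a..<c} =
      (ts_right_scattered T \<inter> {a..<b}) \<union> (ts_right_scattered T \<inter> {b..<c})"
    using assms by auto
  thus ?thesis unfolding ts_defect_sum_def
    by (simp only:) (rule infsum_Un_disjoint[OF ts_defect_summable_on[OF assms(3,5)]
        ts_defect_summable_on[OF assms(4,5)]], auto)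
qed

lemma ts_defect_sum_bounds:
  assumes "b \<in> T" "a \<le> b" "k \<ge> 0"
  shows "0 \<le> ts_defect_sum T k a b" "ts_defect_sum T k a b \<le> k\<^sup>2 * (b - a)\<^sup>2"
proof -
  show "0 \<le> ts_defect_sum T k a b" unfolding ts_defect_sum_def
    by (rule infsum_nonneg) (use ln_defect_bounds ts_mu_nonneg assms(3) in simp)
  have "ts_defect_sum T k a b \<le>
      infsum (\<lambda>u. k\<^sup>2 * (b - a) * ts_mu T u) (ts_right_scattered T \<inter> {a..<b})"
    unfolding ts_defect_sum_def
  proof (rule infsum_mono[OF ts_defect_summable_on[OF assms(1,3)]
        summable_on_cmult_right[OF ts_mu_summable_on[OF assms(1)]]])
    fix u assume u: "u \<in> ts_right_scattered T \<inter> {a..<b}"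
    have mu: "0 \<le> ts_mu T u" "ts_mu T u \<le> b - a"
      using ts_sigma_le[OF assms(1), of u] u ts_mu_nonneg
      by (auto simp: ts_mu_def ts_right_scattered_def)
    have "ln_defect (k * ts_mu T u) \<le> k\<^sup>2 * ts_mu T u * ts_mu T u"
      using ln_defect_bounds(3)[of "k * ts_mu T u"] mu assms(3) by (simp add: power2_eq_square ac_simps)
    also have "\<dots> \<le> k\<^sup>2 * (b - a) * ts_mu T u"
      using mu by (intro mult_right_mono mult_left_mono) auto
    finally show "ln_defect (k * ts_mu T u) \<le> k\<^sup>2 * (b - a) * ts_mu T u" .
  qed
  also have "\<dots> = k\<^sup>2 * (b - a) * infsum (ts_mu T) (ts_right_scattered T \<inter> {a..<b})"
    by (rule infsum_cmult_right[OF ts_mu_summable_on[OF assms(1)]])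
  also have "\<dots> \<le> k\<^sup>2 * (b - a) * (b - a)"
    using assms(2) by (intro mult_left_mono infsum_ts_mu_le[OF assms(1,2)]) auto
  finally show "ts_defect_sum T k a b \<le> k\<^sup>2 * (b - a)\<^sup>2" by (simp add: power2_eq_square)
qed

lemma ts_exp_log_same: "ts_exp_log T k t0 t0 = 0"
  by (simp add: ts_exp_log_def ts_defect_sum_empty)

lemma ts_exp_log_diff:
  assumes "a \<in> T" "b \<in> T" "a \<le> b" "t0 \<in> T" "k \<ge> 0"
  shows "ts_exp_log T k t0 b - ts_exp_log T k t0 a = k * (b - a) - ts_defect_sum T k a b"
proof -
  consider "t0 \<le> a" | "a \<le> t0" "t0 \<le> b" | "b \<le> t0" using assms by linarith
  thus ?thesis
  proof cases
    case 1
    hence "ts_defect_sum T k t0 b = ts_defect_sum T k t0 a + ts_defect_sum T k a b"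
      using assms by (intro ts_defect_sum_split) auto
    thus ?thesis using 1 assms by (simp add: ts_exp_log_def ts_defect_sum_empty algebra_simps)
  next
    case 2
    hence "ts_defect_sum T k a b = ts_defect_sum T k a t0 + ts_defect_sum T k t0 b"
      using assms by (intro ts_defect_sum_split) auto
    thus ?thesis using 2 assms by (simp add: ts_exp_log_def ts_defect_sum_empty algebra_simps)
  next
    case 3
    hence "ts_defect_sum T k a t0 = ts_defect_sum T k a b + ts_defect_sum T k b t0"
      using assms by (intro ts_defect_sum_split) auto
    thus ?thesis using 3 assms by (simp add: ts_exp_log_def ts_defect_sum_empty algebra_simps)
  qed
qed

lemma has_real_derivative_of_quadratic_remainder:
  fixes f :: "real \<Rightarrow> real"
  assumes "\<And>s. s \<in> T \<Longrightarrow> \<bar>f s - f t - D * (s - t)\<bar> \<le> C * (s - t)\<^sup>2"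
  shows "(f has_real_derivative D) (at t within T)"
  unfolding has_field_derivative_def has_derivative_within_alt
proof (intro conjI bounded_linear_mult_right allI impI)
  fix e :: real assume e: "e > 0"
  show "\<exists>d>0. \<forall>s\<in>T. norm (s - t) < d \<longrightarrow> norm (f s - f t - D * (s - t)) \<le> e * norm (s - t)"
  proof (intro exI[of _ "e / (\<bar>C\<bar> + 1)"] conjI ballI impI)
    fix s assume s: "s \<in> T" "norm (s - t) < e / (\<bar>C\<bar> + 1)"
    have "\<bar>f s - f t - D * (s - t)\<bar> \<le> \<bar>C\<bar> * (s - t)\<^sup>2"
      using assms[OF s(1)] by (smt (verit) abs_ge_self mult_right_mono zero_le_power2)
    also have "\<dots> = (\<bar>C\<bar> * \<bar>s - t\<bar>) * \<bar>s - t\<bar>"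
      by (simp add: power2_eq_square)
    also have "\<dots> \<le> e * \<bar>s - t\<bar>"
      using s(2) e by (intro mult_right_mono) (auto simp: field_simps)
    finally show "norm (f s - f t - D * (s - t)) \<le> e * norm (s - t)" by simp
  qed (use e in simp)
qed

lemma ts_exp_log_has_derivative:
  assumes "t \<in> T" "t0 \<in> T" "k \<ge> 0"
  shows "(ts_exp_log T k t0 has_real_derivative k) (at t within T)"
proof (rule has_real_derivative_of_quadratic_remainder[where C="k\<^sup>2"])
  fix s assume s: "s \<in> T"
  show "\<bar>ts_exp_log T k t0 s - ts_exp_log T k t0 t - k * (s - t)\<bar> \<le> k\<^sup>2 * (s - t)\<^sup>2"
  proof (cases "t \<le> s")
    case True
    hence "ts_exp_log T k t0 s - ts_exp_log T k t0 t - k * (s - t) = - ts_defect_sum T k t s"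
      using ts_exp_log_diff[OF assms(1) s True assms(2,3)] by simp
    thus ?thesis using ts_defect_sum_bounds[OF s True assms(3)] by simp
  next
    case False
    hence "s \<le> t" by simp
    hence "ts_exp_log T k t0 s - ts_exp_log T k t0 t - k * (s - t) = ts_defect_sum T k s t"
      using ts_exp_log_diff[OF s assms(1) _ assms(2,3)] by (simp add: algebra_simps)
    thus ?thesis using ts_defect_sum_bounds[OF assms(1) \<open>s \<le> t\<close> assms(3)]
      by (simp add: power2_commute)
  qed
qed

lemma ts_exp_log_jump:
  assumes T: "closed T" and t: "t \<in> T" "t < ts_sigma T t" and "t0 \<in> T" "k \<ge> 0"
  shows "ts_exp_log T k t0 (ts_sigma T t) = ts_exp_log T k t0 t + ln (1 + k * ts_mu T t)"
proof -
  obtain s where s: "s \<in> T" "t < s"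
    using t(2) unfolding ts_sigma_def by (auto split: if_splits)
  have sigma: "ts_sigma T t \<in> T" by (rule ts_sigma_mem[OF T s])
  have "ts_right_scattered T \<inter> {t..<ts_sigma T t} = {t}"
    using t ts_sigma_le[of _ T t] by (force simp: ts_right_scattered_def)
  hence "ts_defect_sum T k t (ts_sigma T t) = ln_defect (k * ts_mu T t)"
    by (simp add: ts_defect_sum_def)
  thus ?thesis using ts_exp_log_diff[OF t(1) sigma _ assms(4,5)] t(2)
    by (simp add: ln_defect_def ts_mu_def)
qed

lemma has_delta_derivative_exp_ts_exp_log:
  assumes T: "closed T" and t: "t \<in> T" and t0: "t0 \<in> T" and k: "k \<ge> 0"
  shows "has_delta_derivative T (\<lambda>s. exp (ts_exp_log T k t0 s)) (k * exp (ts_exp_log T k t0 t)) t"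
proof -
  have D: "((\<lambda>s. exp (ts_exp_log T k t0 s)) has_real_derivative exp (ts_exp_log T k t0 t) * k)
      (at t within T)"
    by (rule DERIV_chain2[OF DERIV_exp ts_exp_log_has_derivative[OF t t0 k]])
  show ?thesis
  proof (cases "ts_sigma T t = t")
    case True
    show ?thesis
      unfolding has_delta_derivative_right_dense_iff[OF t True] using D by (simp add: mult.commute)
  next
    case False
    hence lt: "t < ts_sigma T t" using ts_sigma_ge[of t T] by simp
    have "1 + k * ts_mu T t > 0" using k ts_mu_nonneg[of T t] by (simp add: add_pos_nonneg)
    hence "exp (ts_exp_log T k t0 (ts_sigma T t))
        = exp (ts_exp_log T k t0 t) + k * exp (ts_exp_log T k t0 t) * ts_mu T t"
      by (simp add: ts_exp_log_jump[OF T t lt t0 k] exp_add algebra_simps)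
    thus ?thesis by (rule has_delta_derivative_right_scatteredI[OF t lt _ DERIV_continuous[OF D]])
  qed
qed

section \<open>Comparison with the exponential\<close>

lemma continuous_within_divide:
  fixes f g :: "real \<Rightarrow> real"
  assumes "continuous (at t within T) f" "continuous (at t within T) g" "g t \<noteq> 0"
  shows "continuous (at t within T) (\<lambda>x. f x / g x)"
  using assms unfolding continuous_within by (intro tendsto_divide)

lemma ts_ratio_nonincreasing:
  fixes V E :: "real \<Rightarrow> real"
  assumes T: "closed T" and t0: "t0 \<in> T" and t: "t \<in> T" "t0 \<le> t"
    and E_pos: "\<And>s. s \<in> T \<Longrightarrow> E s > 0"
    and E_deriv: "\<And>s. s \<in> ts_kappa T \<Longrightarrow> has_delta_derivative T E (k * E s) s"
    and V_jump: "\<And>s. s \<in> T \<Longrightarrow> t0 \<le> s \<Longrightarrow> s < t \<Longrightarrow> s < ts_sigma T s \<Longrightarrow>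
        V (ts_sigma T s) \<le> (1 + k * ts_mu T s)\<^sup>2 * V s"
    and V_deriv: "\<And>s. s \<in> T \<Longrightarrow> t0 \<le> s \<Longrightarrow> s < t \<Longrightarrow> ts_sigma T s = s \<Longrightarrow>
        \<exists>D\<le>2 * k * V s. (V has_real_derivative D) (at s within T)"
    and V_cont: "\<And>s. s \<in> T \<Longrightarrow> t0 < s \<Longrightarrow> s \<le> t \<Longrightarrow>
        (\<forall>d>0. \<exists>r\<in>T. s - d < r \<and> r < s) \<Longrightarrow> continuous (at s within T) V"
  shows "V t / (E t)\<^sup>2 \<le> V t0 / (E t0)\<^sup>2"
proof (rule ts_nonpos_imp_nonincreasing[OF T t0 t, where F = "\<lambda>x. V x / (E x)\<^sup>2"])
  fix s assume s: "s \<in> T" "t0 \<le> s" "s < t" "s < ts_sigma T s"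
  have E_jump: "E (ts_sigma T s) = (1 + k * ts_mu T s) * E s"
    using has_delta_derivative_jump[OF E_deriv[OF less_in_ts_kappa[OF s(1) t(1) s(3)]] s(1)]
    by (simp add: algebra_simps)
  have "E (ts_sigma T s) > 0" by (rule E_pos[OF ts_sigma_mem[OF T t(1) s(3)]])
  hence "1 + k * ts_mu T s \<noteq> 0" using E_jump by auto
  hence "V (ts_sigma T s) / (1 + k * ts_mu T s)\<^sup>2 \<le> V s"
    using V_jump[OF s] by (simp add: divide_le_eq mult.commute)
  hence "V (ts_sigma T s) / (1 + k * ts_mu T s)\<^sup>2 / (E s)\<^sup>2 \<le> V s / (E s)\<^sup>2"
    by (rule divide_right_mono) simp
  thus "V (ts_sigma T s) / (E (ts_sigma T s))\<^sup>2 \<le> V s / (E s)\<^sup>2"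
    by (simp add: E_jump power_mult_distrib)
next
  fix s assume s: "s \<in> T" "t0 \<le> s" "s < t" "ts_sigma T s = s"
  obtain D where "D \<le> 2 * k * V s" and V': "(V has_real_derivative D) (at s within T)"
    using V_deriv[OF s] by blast
  have E': "(E has_real_derivative k * E s) (at s within T)"
    using E_deriv[OF less_in_ts_kappa[OF s(1) t(1) s(3)]]
    unfolding has_delta_derivative_right_dense_iff[OF s(1,4)] .
  have Es: "E s > 0" by (rule E_pos[OF s(1)])
  have "((\<lambda>x. V x / (E x)\<^sup>2) has_real_derivative
      (D * (E s)\<^sup>2 - V s * (2 * E s * (k * E s))) / ((E s)\<^sup>2 * (E s)\<^sup>2)) (at s within T)"
    using Es by (auto intro!: derivative_eq_intros V' E')
  moreover have "(D * (E s)\<^sup>2 - V s * (2 * E s * (k * E s))) / ((E s)\<^sup>2 * (E s)\<^sup>2) \<le> 0"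
  proof -
    have "D * (E s)\<^sup>2 - V s * (2 * E s * (k * E s)) = (D - 2 * k * V s) * (E s)\<^sup>2"
      by (simp add: algebra_simps power2_eq_square)
    also have "\<dots> \<le> 0" using \<open>D \<le> 2 * k * V s\<close> by (simp add: mult_nonpos_nonneg)
    finally show ?thesis using Es by (intro divide_nonpos_pos) auto
  qed
  ultimately show "\<exists>D\<le>0. ((\<lambda>x. V x / (E x)\<^sup>2) has_real_derivative D) (at s within T)" by blast
next
  fix s assume s: "s \<in> T" "t0 < s" "s \<le> t" and ld: "\<forall>d>0. \<exists>r\<in>T. s - d < r \<and> r < s"
  have "continuous (at s within T) E"
    by (rule has_delta_derivative_continuous[OF E_deriv[OF left_dense_in_ts_kappa[OF s(1) ld]] s(1)])
  thus "continuous (at s within T) (\<lambda>x. V x / (E x)\<^sup>2)"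
    using E_pos[OF s(1)] V_cont[OF s ld]
    by (intro continuous_within_divide continuous_intros) auto
qed

lemma ts_exp_solution_unique:
  fixes \<phi> E :: "real \<Rightarrow> real"
  assumes T: "closed T" and t0: "t0 \<in> T" and t: "t \<in> T" "t0 \<le> t"
    and E_pos: "\<And>s. s \<in> T \<Longrightarrow> E s > 0"
    and E_deriv: "\<And>s. s \<in> ts_kappa T \<Longrightarrow> has_delta_derivative T E (k * E s) s"
    and \<phi>_deriv: "\<And>s. s \<in> ts_kappa T \<Longrightarrow> has_delta_derivative T \<phi> (k * \<phi> s) s"
    and init: "\<phi> t0 = E t0"
  shows "\<phi> t = E t"
proof -
  define V where "V x = (\<phi> x - E x)\<^sup>2" for x
  have "V t / (E t)\<^sup>2 \<le> V t0 / (E t0)\<^sup>2"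
  proof (rule ts_ratio_nonincreasing[OF T t0 t E_pos E_deriv])
    fix s assume s: "s \<in> T" "t0 \<le> s" "s < t" "s < ts_sigma T s"
    have "s \<in> ts_kappa T" by (rule less_in_ts_kappa[OF s(1) t(1) s(3)])
    thus "V (ts_sigma T s) \<le> (1 + k * ts_mu T s)\<^sup>2 * V s"
      using has_delta_derivative_jump[OF \<phi>_deriv s(1)] has_delta_derivative_jump[OF E_deriv s(1)]
      by (simp add: V_def power_mult_distrib[symmetric] algebra_simps)
  next
    fix s assume s: "s \<in> T" "t0 \<le> s" "s < t" "ts_sigma T s = s"
    have "s \<in> ts_kappa T" by (rule less_in_ts_kappa[OF s(1) t(1) s(3)])
    hence "(\<phi> has_real_derivative k * \<phi> s) (at s within T)"
      "(E has_real_derivative k * E s) (at s within T)"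
      using \<phi>_deriv E_deriv by (simp_all add: has_delta_derivative_right_dense_iff[OF s(1,4), symmetric])
    hence "(V has_real_derivative 2 * k * V s) (at s within T)"
      unfolding V_def[abs_def] by (auto intro!: derivative_eq_intros simp: power2_eq_square algebra_simps)
    thus "\<exists>D\<le>2 * k * V s. (V has_real_derivative D) (at s within T)" by blast
  next
    fix s assume s: "s \<in> T" and ld: "\<forall>d>0. \<exists>r\<in>T. s - d < r \<and> r < s"
    have "s \<in> ts_kappa T" by (rule left_dense_in_ts_kappa[OF s ld])
    thus "continuous (at s within T) V"
      unfolding V_def[abs_def] using s \<phi>_deriv E_deriv
      by (intro continuous_intros has_delta_derivative_continuous) auto
  qed
  hence "V t \<le> 0" using init E_pos[OF t(1)] by (simp add: V_def divide_le_0_iff)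
  thus ?thesis by (simp add: V_def)
qed

lemma ts_exp_const_eq:
  assumes T: "closed T" and t0: "t0 \<in> T" and t: "t \<in> T" "t0 \<le> t" and k: "k \<ge> 0"
  shows "ts_exp T (\<lambda>_. k) t t0 = exp (ts_exp_log T k t0 t)"
  unfolding ts_exp_def
proof (rule the_equality)
  let ?E = "\<lambda>s. exp (ts_exp_log T k t0 s)"
  have E_deriv: "has_delta_derivative T ?E (k * ?E s) s" if "s \<in> ts_kappa T" for s
    using has_delta_derivative_exp_ts_exp_log[OF T _ t0 k] ts_kappa_subset that by blast
  have E_init: "?E t0 = 1" by (simp add: ts_exp_log_same)
  show "\<exists>\<phi>. \<phi> t0 = 1 \<and> (\<forall>s\<in>ts_kappa T. has_delta_derivative T \<phi> (k * \<phi> s) s) \<and> \<phi> t = ?E t"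
    using E_deriv E_init by (intro exI[of _ ?E]) blast
  fix v assume "\<exists>\<phi>. \<phi> t0 = 1 \<and> (\<forall>s\<in>ts_kappa T. has_delta_derivative T \<phi> (k * \<phi> s) s) \<and> \<phi> t = v"
  then obtain \<phi> where "\<phi> t0 = 1" "\<And>s. s \<in> ts_kappa T \<Longrightarrow> has_delta_derivative T \<phi> (k * \<phi> s) s"
    "\<phi> t = v" by blast
  thus "v = ?E t"
    using ts_exp_solution_unique[OF T t0 t _ E_deriv, of \<phi>] E_init by simp
qed

section \<open>The second-order equation\<close>

lemma companion_inner_le:
  fixes a b p q :: real
  shows "a * b + b * (- p * b - q * a) \<le> (1 + \<bar>p\<bar> + \<bar>q\<bar>) * (a\<^sup>2 + b\<^sup>2)"
proof -
  have "2 * \<bar>a\<bar> * \<bar>b\<bar> \<le> a\<^sup>2 + b\<^sup>2" using sum_squares_bound[of "\<bar>a\<bar>" "\<bar>b\<bar>"] by simp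
  moreover have "0 \<le> \<bar>a\<bar> * \<bar>b\<bar>" by simp
  ultimately have ab: "\<bar>a\<bar> * \<bar>b\<bar> \<le> a\<^sup>2 + b\<^sup>2" by linarith
  have "a * b \<le> a\<^sup>2 + b\<^sup>2" using ab abs_ge_self[of "a * b"] by (simp add: abs_mult)
  moreover have "- p * b\<^sup>2 \<le> \<bar>p\<bar> * (a\<^sup>2 + b\<^sup>2)"
    using mult_right_mono[of "- p" "\<bar>p\<bar>" "b\<^sup>2"] mult_left_mono[of "b\<^sup>2" "a\<^sup>2 + b\<^sup>2" "\<bar>p\<bar>"]
    by (simp add: abs_ge_minus_self)
  moreover have "- q * a * b \<le> \<bar>q\<bar> * (a\<^sup>2 + b\<^sup>2)"
  proof -
    have "- q * a * b \<le> \<bar>q\<bar> * (\<bar>a\<bar> * \<bar>b\<bar>)"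
      by (metis abs_ge_minus_self abs_mult mult.assoc mult_minus_left)
    also have "\<dots> \<le> \<bar>q\<bar> * (a\<^sup>2 + b\<^sup>2)" using ab by (intro mult_left_mono) auto
    finally show ?thesis .
  qed
  moreover have "a * b + b * (- p * b - q * a) = a * b + (- p * b\<^sup>2) + (- q * a * b)"
    by (simp add: algebra_simps power2_eq_square)
  moreover have "(1 + \<bar>p\<bar> + \<bar>q\<bar>) * (a\<^sup>2 + b\<^sup>2)
      = (a\<^sup>2 + b\<^sup>2) + \<bar>p\<bar> * (a\<^sup>2 + b\<^sup>2) + \<bar>q\<bar> * (a\<^sup>2 + b\<^sup>2)"
    by (simp add: algebra_simps)
  ultimately show ?thesis by linarith
qed

lemma companion_norm_le:
  fixes a b p q :: real
  shows "b\<^sup>2 + (p * b + q * a)\<^sup>2 \<le> (1 + \<bar>p\<bar> + \<bar>q\<bar>)\<^sup>2 * (a\<^sup>2 + b\<^sup>2)"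
proof -
  have "(p * b + q * a)\<^sup>2 \<le> (p\<^sup>2 + q\<^sup>2) * (b\<^sup>2 + a\<^sup>2)"
    using sum_squares_bound[of "p * a" "q * b"] by (simp add: algebra_simps power2_eq_square)
  also have "\<dots> \<le> (\<bar>p\<bar> + \<bar>q\<bar>)\<^sup>2 * (b\<^sup>2 + a\<^sup>2)"
    by (intro mult_right_mono) (simp_all add: power2_sum)
  finally have "(p * b + q * a)\<^sup>2 \<le> (\<bar>p\<bar> + \<bar>q\<bar>)\<^sup>2 * (a\<^sup>2 + b\<^sup>2)"
    by (simp add: add.commute)
  moreover have "(1 + \<bar>p\<bar> + \<bar>q\<bar>)\<^sup>2 * (a\<^sup>2 + b\<^sup>2)
      = a\<^sup>2 + b\<^sup>2 + 2 * ((\<bar>p\<bar> + \<bar>q\<bar>) * (a\<^sup>2 + b\<^sup>2)) + (\<bar>p\<bar> + \<bar>q\<bar>)\<^sup>2 * (a\<^sup>2 + b\<^sup>2)"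
    by (simp add: power2_eq_square algebra_simps)
  moreover have "0 \<le> (\<bar>p\<bar> + \<bar>q\<bar>) * (a\<^sup>2 + b\<^sup>2)" by simp
  ultimately show ?thesis using zero_le_power2[of a] by linarith
qed

lemma companion_euler_step_le:
  fixes a b p q m :: real
  assumes "m \<ge> 0"
  shows "(a + m * b)\<^sup>2 + (b + m * (- p * b - q * a))\<^sup>2
    \<le> (1 + (1 + \<bar>p\<bar> + \<bar>q\<bar>) * m)\<^sup>2 * (a\<^sup>2 + b\<^sup>2)"
proof -
  define k where "k = 1 + \<bar>p\<bar> + \<bar>q\<bar>"
  have "(a + m * b)\<^sup>2 + (b + m * (- p * b - q * a))\<^sup>2
      = (a\<^sup>2 + b\<^sup>2) + 2 * m * (a * b + b * (- p * b - q * a)) + m\<^sup>2 * (b\<^sup>2 + (p * b + q * a)\<^sup>2)"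
    by (simp add: algebra_simps power2_eq_square)
  also have "\<dots> \<le> (a\<^sup>2 + b\<^sup>2) + 2 * m * (k * (a\<^sup>2 + b\<^sup>2)) + m\<^sup>2 * (k\<^sup>2 * (a\<^sup>2 + b\<^sup>2))"
    using assms companion_inner_le[of a b p q] companion_norm_le[of b p q a]
    unfolding k_def by (intro add_mono mult_left_mono) auto
  also have "\<dots> = (1 + k * m)\<^sup>2 * (a\<^sup>2 + b\<^sup>2)"
    by (simp add: algebra_simps power2_eq_square)
  finally show ?thesis unfolding k_def .
qed

lemma second_order_energy_le:
  fixes y y1 y2 :: "real \<Rightarrow> real"
  assumes T: "closed T" and I: "is_interval I" and t0: "t0 \<in> I \<inter> T"
    and y_deriv: "\<And>t. t \<in> I \<inter> T \<Longrightarrow> has_delta_derivative T y (y1 t) t"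
    and y1_deriv: "\<And>t. t \<in> I \<inter> T \<Longrightarrow> has_delta_derivative T y1 (y2 t) t"
    and equation: "\<And>t. t \<in> I \<inter> T \<Longrightarrow> y2 t + p * y1 t + q * y t = 0"
    and t: "t \<in> I \<inter> T" "t0 \<le> t"
  shows "(y t)\<^sup>2 + (y1 t)\<^sup>2 \<le> ((y t0)\<^sup>2 + (y1 t0)\<^sup>2) * (ts_exp T (\<lambda>_. 1 + \<bar>p\<bar> + \<bar>q\<bar>) t t0)\<^sup>2"
proof -
  define k where "k = 1 + \<bar>p\<bar> + \<bar>q\<bar>"
  define E where "E s = exp (ts_exp_log T k t0 s)" for s
  define V where "V s = (y s)\<^sup>2 + (y1 s)\<^sup>2" for s
  have k: "k \<ge> 0" by (simp add: k_def)
  have in_I: "s \<in> I \<inter> T" if "s \<in> T" "t0 \<le> s" "s \<le> t" for s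
    using I t0 t that unfolding is_interval_1 by blast
  have y2: "y2 s = - p * y1 s - q * y s" if "s \<in> I \<inter> T" for s
    using equation[OF that] by simp
  have "V t / (E t)\<^sup>2 \<le> V t0 / (E t0)\<^sup>2"
  proof (rule ts_ratio_nonincreasing[OF T _ _ t(2)])
    fix s assume s: "s \<in> T" "t0 \<le> s" "s < t" "s < ts_sigma T s"
    have sI: "s \<in> I \<inter> T" using in_I s by simp
    have "y (ts_sigma T s) = y s + ts_mu T s * y1 s"
      using has_delta_derivative_jump[OF y_deriv[OF sI] s(1)] by simp
    moreover have "y1 (ts_sigma T s) = y1 s + ts_mu T s * (- p * y1 s - q * y s)"
      using has_delta_derivative_jump[OF y1_deriv[OF sI] s(1)] by (simp add: y2[OF sI])
    ultimately show "V (ts_sigma T s) \<le> (1 + k * ts_mu T s)\<^sup>2 * V s"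
      unfolding V_def k_def by (simp only: companion_euler_step_le[OF ts_mu_nonneg])
  next
    fix s assume s: "s \<in> T" "t0 \<le> s" "s < t" "ts_sigma T s = s"
    have sI: "s \<in> I \<inter> T" using in_I s by simp
    have "(y has_real_derivative y1 s) (at s within T)" "(y1 has_real_derivative y2 s) (at s within T)"
      using y_deriv[OF sI] y1_deriv[OF sI]
      by (simp_all add: has_delta_derivative_right_dense_iff[OF s(1,4), symmetric])
    hence "(V has_real_derivative 2 * (y s * y1 s + y1 s * y2 s)) (at s within T)"
      unfolding V_def[abs_def] by (auto intro!: derivative_eq_intros simp: algebra_simps)
    moreover have "y s * y1 s + y1 s * y2 s \<le> k * V s"
      using companion_inner_le[of "y s" "y1 s" p q] by (simp add: y2[OF sI] V_def k_def)
    ultimately show "\<exists>D\<le>2 * k * V s. (V has_real_derivative D) (at s within T)"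
      by (intro exI[of _ "2 * (y s * y1 s + y1 s * y2 s)"]) simp
  next
    fix s assume s: "s \<in> T" "t0 < s" "s \<le> t"
    have sI: "s \<in> I \<inter> T" using in_I s by simp
    show "continuous (at s within T) V"
      unfolding V_def[abs_def] using s(1) y_deriv[OF sI] y1_deriv[OF sI]
      by (intro continuous_intros has_delta_derivative_continuous)
  qed (use T t0 t k in \<open>auto simp: E_def intro: has_delta_derivative_exp_ts_exp_log
      dest: set_mp[OF ts_kappa_subset]\<close>)
  moreover have "E t0 = 1" "E t \<noteq> 0" by (simp_all add: E_def ts_exp_log_same)
  moreover have "ts_exp T (\<lambda>_. 1 + \<bar>p\<bar> + \<bar>q\<bar>) t t0 = E t"
    using ts_exp_const_eq[OF T _ _ t(2) k] t0 t by (simp add: E_def k_def)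
  ultimately show ?thesis by (simp add: V_def divide_le_eq)
qed

theorem theorem2p2:
  fixes T I :: "real set" and t0 p q :: real and y y1 y2 :: "real \<Rightarrow> real"
  assumes "time_scale T"
    and "is_interval I"
    and "t0 \<in> I \<inter> T"
    and "\<And>t. t \<in> I \<inter> T \<Longrightarrow> has_delta_derivative T y (y1 t) t"
    and "\<And>t. t \<in> I \<inter> T \<Longrightarrow> has_delta_derivative T y1 (y2 t) t"
    and "\<And>t. t \<in> I \<inter> T \<Longrightarrow> y2 t + p * y1 t + q * y t = 0"
  shows "\<forall>t\<in>I \<inter> T. t \<ge> t0 \<longrightarrow>
           sqrt ((y t)\<^sup>2 + (y1 t)\<^sup>2)
             \<le> sqrt ((y t0)\<^sup>2 + (y1 t0)\<^sup>2) * ts_exp T (\<lambda>_. 1 + \<bar>p\<bar> + \<bar>q\<bar>) t t0"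
proof (intro ballI impI)
  fix t assume t: "t \<in> I \<inter> T" "t0 \<le> t"
  let ?e = "ts_exp T (\<lambda>_. 1 + \<bar>p\<bar> + \<bar>q\<bar>) t t0"
  have T: "closed T" using assms(1) by (simp add: time_scale_def)
  have "?e = exp (ts_exp_log T (1 + \<bar>p\<bar> + \<bar>q\<bar>) t0 t)"
    using ts_exp_const_eq[OF T _ _ t(2)] assms(3) t(1) by simp
  hence "?e > 0" by simp
  have "sqrt ((y t)\<^sup>2 + (y1 t)\<^sup>2) \<le> sqrt (((y t0)\<^sup>2 + (y1 t0)\<^sup>2) * ?e\<^sup>2)"
    by (rule real_sqrt_le_mono[OF second_order_energy_le[OF T assms(2-6) t]])
  also have "\<dots> = sqrt ((y t0)\<^sup>2 + (y1 t0)\<^sup>2) * ?e"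
    using \<open>?e > 0\<close> by (simp add: real_sqrt_mult)
  finally show "sqrt ((y t)\<^sup>2 + (y1 t)\<^sup>2) \<le> sqrt ((y t0)\<^sup>2 + (y1 t0)\<^sup>2) * ?e" .
qed

end
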